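(* Let $k>0$ and let $T$ be large. For every $1\le j\le \mathcal{J}$ and every complex number $s$, writing $K_j=\lceil e^2k\alpha_j^{-3/4}\rceil$ and $\delta_j = e^{-e^2k\alpha_j^{-3/4}}$: (i) if $0<k\le 1/2$, then $$|\mathcal{N}_j(s,k)|^{2/k}|\mathcal{N}_j(s,k-1)|^{2} \le |\mathcal{N}_j(s,k)|^2(1+\delta_j)^{2/k+2}(1-\delta_j)^{-2} + |\mathcal{Q}_j(s,k)|^{2r_k};$$ (ii) if $k>1/2$, then $$|\mathcal{N}_j(s,k-1)\mathcal{N}_j(s,k)|^{\frac{2k}{2k-1}} \le |\mathcal{N}_j(s,k)|^2(1+\delta_j)^{\frac{2k}{2k-1}}(1-\delta_j)^{-2} + |\mathcal{Q}_j(s,k)|^{2r_k}.$$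
   Context: Fix real $k>0$, a large number $M$ depending only on $k$, and a large number $T$. Set $\alpha_0=0$, $\alpha_j = 20^{j-1}/(\log\log T)^2$ for $j\ge1$, and $\mathcal{J}=1+\max\{j:\alpha_j\le 10^{-M}\}$. Let $I_j=(T^{\alpha_{j-1}},T^{\alpha_j}]$ for $1\le j\le\mathcal{J}$. For real $\ell$ and $x$ (or complex $x$) put $E_\ell(x)=\sum_{i=0}^{\lceil \ell\rceil} x^i/i!$. For $1\le j\le \mathcal{J}$, real $\alpha$ and complex $s$ define $\mathcal{P}_j(s)=\sum_{p\in I_j}p^{-s}$ ($p$ prime), $\mathcal{N}_j(s,\alpha)=E_{e^2k\alpha_j^{-3/4}}(\alpha\mathcal{P}_j(s))$, and $$\mathcal{Q}_j(s,k)=\Big(\frac{64\max(2,k+3/2)\,\mathcal{P}_j(s)}{\lceil e^2k\alpha_j^{-3/4}\rceil}\Big)^{\lceil e^2k\alpha_j^{-3/4}\rceil}.$$ Set $r_k=2+\lceil 1/k\rceil$ if $0<k\le1/2$ and $r_k=1+\lceil 2k/(2k-1)\rceil$ if $k>1/2$. *)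

theory Defs
  imports "HOL-Analysis.Analysis" "HOL-Computational_Algebra.Primes"
begin

definition alpha :: "real \<Rightarrow> nat \<Rightarrow> real" where
  "alpha T j = (if j = 0 then 0 else 20 ^ (j - 1) / (ln (ln T))^2)"

definition Jcal :: "real \<Rightarrow> real \<Rightarrow> nat" where
  "Jcal T M = 1 + Max {j::nat. alpha T j \<le> 10 powr (-M)}"

definition Iprimes :: "real \<Rightarrow> nat \<Rightarrow> nat set" where
  "Iprimes T j = {p::nat. prime p \<and> T powr alpha T (j - 1) < real p \<and> real p \<le> T powr alpha T j}"

definition Pj :: "real \<Rightarrow> nat \<Rightarrow> complex \<Rightarrow> complex" where
  "Pj T j s = (\<Sum>p\<in>Iprimes T j. (of_nat p :: complex) powr (- s))"

definition Etr :: "real \<Rightarrow> complex \<Rightarrow> complex" where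
  "Etr l x = (\<Sum>i = 0..nat \<lceil>l\<rceil>. x ^ i / of_nat (fact i))"

definition Kj :: "real \<Rightarrow> real \<Rightarrow> nat \<Rightarrow> nat" where
  "Kj k T j = nat \<lceil>exp 2 * k * alpha T j powr (- 3/4)\<rceil>"

definition Nj :: "real \<Rightarrow> real \<Rightarrow> nat \<Rightarrow> complex \<Rightarrow> real \<Rightarrow> complex" where
  "Nj k T j s a = Etr (exp 2 * k * alpha T j powr (- 3/4)) (complex_of_real a * Pj T j s)"

definition Qj :: "real \<Rightarrow> real \<Rightarrow> nat \<Rightarrow> complex \<Rightarrow> complex" where
  "Qj k T j s = (complex_of_real (64 * max 2 (k + 3/2)) * Pj T j s / of_nat (Kj k T j)) ^ Kj k T j"

definition rk :: "real \<Rightarrow> nat" where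
  "rk k = (if k \<le> 1/2 then 2 + nat \<lceil>1 / k\<rceil> else 1 + nat \<lceil>2 * k / (2 * k - 1)\<rceil>)"

definition deltaj :: "real \<Rightarrow> real \<Rightarrow> nat \<Rightarrow> real" where
  "deltaj k T j = exp (- (exp 2 * k * alpha T j powr (- 3/4)))"

end

theory Submission
  imports Defs
begin

text \<open>
  \<open>N\<^sub>j(s, a)\<close> is the degree \<open>K\<^sub>j\<close> Taylor polynomial of \<open>exp (a P\<^sub>j(s))\<close>, and only
  \<open>a = k\<close> and \<open>a = k - 1\<close> occur, both of absolute value at most \<open>c = max 2 (k + 3/2)\<close>.
  If \<open>c |P\<^sub>j(s)| \<le> K\<^sub>j/32\<close>, the truncation error is at most \<open>\<delta>\<^sub>j/3\<close> times \<open>|exp (a P\<^sub>j(s))|\<close>,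
  so \<open>|N\<^sub>j(s,k)|\<close> and \<open>|N\<^sub>j(s,k-1)|\<close> are within a factor \<open>1 \<plusminus> \<delta>\<^sub>j/3\<close> of
  \<open>exp (k Re P\<^sub>j(s))\<close> and \<open>exp ((k-1) Re P\<^sub>j(s))\<close>; the exponents in (i) and (ii) are
  exactly those for which the powers of \<open>exp (Re P\<^sub>j(s))\<close> on both sides cancel.
  Otherwise every term of the Taylor polynomial is dominated, giving
  \<open>|N\<^sub>j(s,a)| \<le> |Q\<^sub>j(s,k)|\<close> with \<open>|Q\<^sub>j(s,k)| \<ge> 1\<close>, and \<open>r\<^sub>k\<close> is large enough that the
  left-hand sides are at most \<open>|Q\<^sub>j(s,k)|\<^bsup>2r\<^sub>k\<^esup>\<close>.
  All this only needs \<open>\<alpha>\<^sub>j > 0\<close>, i.e. \<open>log log T > 0\<close>.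
\<close>

lemma exp_partial_sum_le:
  fixes x :: real
  assumes "0 \<le> x"
  shows "(\<Sum>i=0..n. x ^ i / fact i) \<le> exp x"
proof -
  have "(\<Sum>i=0..n. x ^ i /\<^sub>R fact i) \<le> (\<Sum>i. x ^ i /\<^sub>R fact i)"
    by (rule sum_le_suminf[OF summable_exp_generic]) (use assms in auto)
  then show ?thesis by (simp add: exp_def divide_inverse mult.commute)
qed

lemma norm_exp_partial_sum_le:
  fixes z :: complex
  assumes "cmod z \<le> u"
  shows "cmod (\<Sum>i=0..n. z ^ i / of_nat (fact i)) \<le> (\<Sum>i=0..n. u ^ i / fact i)"
proof -
  have "cmod (\<Sum>i=0..n. z ^ i / of_nat (fact i)) \<le> (\<Sum>i=0..n. cmod z ^ i / fact i)"
    using norm_sum[of "\<lambda>i. z ^ i / of_nat (fact i)" "{0..n}"] by (simp add: norm_divide norm_power)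
  also have "\<dots> \<le> (\<Sum>i=0..n. u ^ i / fact i)"
    by (intro sum_mono divide_right_mono power_mono assms) auto
  finally show ?thesis .
qed

lemma norm_exp_minus_partial_sum_le:
  fixes z :: complex
  assumes z: "cmod z \<le> real K / 32"
  shows "cmod (exp z - (\<Sum>i=0..K. z ^ i / of_nat (fact i))) \<le> exp (- real K) * exp (- real K / 32) / 3"
proof -
  txt \<open>Lagrange remainder, \<open>K\<^sup>K/K! \<le> e\<^sup>K\<close>, and \<open>e\<^bsup>33/16\<^esup> \<le> 16\<close> to absorb
    \<open>e\<^bsup>K/32\<^esup> e\<^sup>K\<close> against the target factor \<open>e\<^bsup>-K-K/32\<^esup>\<close>.\<close>
  have "exp (33/16 :: real) = exp 1 ^ 2 * exp (1/16)"
    by (simp add: exp_add[symmetric] exp_of_nat_mult[symmetric])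
  also have "\<dots> \<le> 3 ^ 2 * (1 + 1/16 + (1/16)\<^sup>2)"
    by (intro mult_mono power_mono exp_le exp_bound) auto
  finally have exp_33_16: "exp (33/16) / 32 \<le> (1/2 :: real)" by (simp add: power2_eq_square)
  have "cmod (exp z - (\<Sum>i=0..K. z ^ i / of_nat (fact i))) \<le> exp (cmod z) * cmod z ^ Suc K / fact K"
    using Taylor_exp_field[of z K] by (simp add: atLeast0AtMost)
  also have "\<dots> \<le> exp (real K / 32) * (real K / 32) ^ Suc K / fact K"
    by (intro divide_right_mono mult_mono power_mono) (use z in auto)
  also have "\<dots> = real K / 32 * (exp (real K / 32) / 32 ^ K) * (real K ^ K / fact K)"
    by (simp add: power_divide)
  also have "\<dots> \<le> real K / 32 * (exp (real K / 32) / 32 ^ K) * exp (real K)"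
    using member_le_sum[of K "{0..K}" "\<lambda>i. real K ^ i / fact i"] exp_partial_sum_le[of "real K" K]
    by (intro mult_left_mono) auto
  also have "\<dots> = real K / 32 * (exp (33/16) / 32) ^ K * (exp (- real K) * exp (- real K / 32))"
  proof -
    have "exp (33/16) ^ K * (exp (- real K) * exp (- real K / 32)) = exp (real K / 32) * exp (real K)"
      by (simp add: exp_of_nat_mult[symmetric] exp_add[symmetric] algebra_simps)
    then show ?thesis by (simp add: power_divide)
  qed
  also have "\<dots> \<le> real K / 32 * (1/2) ^ K * (exp (- real K) * exp (- real K / 32))"
    by (intro mult_left_mono mult_right_mono power_mono exp_33_16) auto
  also have "\<dots> \<le> 1/3 * (exp (- real K) * exp (- real K / 32))"
  proof -
    have "real K \<le> 2 ^ K" by simp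
    then have "real K * 3 \<le> 2 ^ K * 32" by linarith
    then have "real K / 32 * (1/2) ^ K \<le> 1/3" by (simp add: power_one_over field_simps)
    then show ?thesis by (intro mult_right_mono) auto
  qed
  finally show ?thesis by simp
qed

lemma norm_exp_partial_sum_rel_error:
  fixes z :: complex
  assumes z: "cmod z \<le> real K / 32" and d: "exp (- real K) \<le> d"
  shows "cmod (\<Sum>i=0..K. z ^ i / of_nat (fact i)) \<le> cmod (exp z) * (1 + d/3)"
    and "cmod (exp z) * (1 - d/3) \<le> cmod (\<Sum>i=0..K. z ^ i / of_nat (fact i))"
proof -
  let ?S = "\<Sum>i=0..K. z ^ i / of_nat (fact i)"
  have "exp (- real K / 32) \<le> exp (Re z)"
    using z abs_Re_le_cmod[of z] by simp
  then have exp_z: "exp (- real K / 32) \<le> cmod (exp z)" by simp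
  have "cmod (exp z - ?S) \<le> exp (- real K) * exp (- real K / 32) / 3"
    by (rule norm_exp_minus_partial_sum_le[OF z])
  also have "\<dots> \<le> d * cmod (exp z) / 3"
    by (intro divide_right_mono mult_mono d exp_z) (use d in \<open>auto intro: order_trans[OF exp_ge_zero]\<close>)
  finally have err: "cmod (exp z - ?S) \<le> cmod (exp z) * (d/3)" by (simp add: mult.commute)
  show "cmod ?S \<le> cmod (exp z) * (1 + d/3)"
    using norm_triangle_ineq4[of "exp z" "exp z - ?S"] err by (simp add: algebra_simps)
  show "cmod (exp z) * (1 - d/3) \<le> cmod ?S"
    using norm_triangle_ineq[of ?S "exp z - ?S"] err by (simp add: algebra_simps)
qed

lemma exp_partial_sum_le_power:
  fixes u :: real
  assumes K: "1 \<le> K" and u: "real K / 32 < u"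
  shows "(\<Sum>i=0..K. u ^ i / fact i) \<le> (64 * u / real K) ^ K"
proof -
  define w where "w = 32 * u / real K"
  have w1: "1 \<le> w" using u K by (simp add: w_def field_simps)
  have u_eq: "u = w * (real K / 32)" using K by (simp add: w_def)
  have "(\<Sum>i=0..K. u ^ i / fact i) \<le> (\<Sum>i=0..K. w ^ K * ((real K / 32) ^ i / fact i))"
  proof (rule sum_mono)
    fix i assume "i \<in> {0..K}"
    then have "w ^ i \<le> w ^ K" by (intro power_increasing w1) auto
    have "u ^ i / fact i = w ^ i * ((real K / 32) ^ i / fact i)"
      unfolding u_eq power_mult_distrib by simp
    also have "\<dots> \<le> w ^ K * ((real K / 32) ^ i / fact i)"
      using \<open>w ^ i \<le> w ^ K\<close> by (rule mult_right_mono) simp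
    finally show "u ^ i / fact i \<le> w ^ K * ((real K / 32) ^ i / fact i)" .
  qed
  also have "\<dots> \<le> w ^ K * exp (real K / 32)"
    unfolding sum_distrib_left[symmetric] using w1 by (intro mult_left_mono exp_partial_sum_le) auto
  also have "\<dots> \<le> w ^ K * 2 ^ K"
  proof -
    have "exp (real K / 32) = exp (1/32) ^ K" by (simp add: exp_of_nat_mult[symmetric])
    also have "\<dots> \<le> exp (1/2) ^ K" by (intro power_mono) auto
    also have "\<dots> \<le> 2 ^ K" by (intro power_mono exp_half_le2) auto
    finally show ?thesis using w1 by (intro mult_left_mono) auto
  qed
  also have "\<dots> = (64 * u / real K) ^ K" by (simp add: w_def power_mult_distrib[symmetric])
  finally show ?thesis .
qed

lemma square_le_of_lower_approx:
  fixes A X d :: real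
  assumes approx: "X * (1 - d/3) \<le> A" and "0 \<le> X" "0 \<le> d" "d < 1"
  shows "X\<^sup>2 \<le> A\<^sup>2 * (1 - d) powr (-2)"
proof -
  have "X * (1 - d) \<le> X * (1 - d/3)"
    using assms by (intro mult_left_mono) auto
  then have "X * (1 - d) \<le> A"
    using approx by linarith
  then have "(X * (1 - d))\<^sup>2 \<le> A\<^sup>2"
    using assms by (intro power_mono) auto
  then have "X\<^sup>2 * (1 - d)\<^sup>2 \<le> A\<^sup>2"
    by (simp only: power_mult_distrib)
  then show ?thesis
    using assms by (simp add: powr_minus powr_realpow field_simps)
qed

lemma powr_mult_square_le_of_approx:
  fixes k A B R d :: real
  assumes k: "0 < k" and d: "0 \<le> d" "d < 1" and "0 \<le> A" "0 \<le> B"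
    and A_upper: "A \<le> exp (k * R) * (1 + d/3)" and A_lower: "exp (k * R) * (1 - d/3) \<le> A"
    and B_upper: "B \<le> exp ((k - 1) * R) * (1 + d/3)"
  shows "A powr (2/k) * B\<^sup>2 \<le> A\<^sup>2 * (1 + d) powr (2/k + 2) * (1 - d) powr (-2)"
proof -
  have "A powr (2/k) \<le> (exp (k * R) * (1 + d/3)) powr (2/k)"
    using assms by (intro powr_mono2) auto
  also have "\<dots> = exp (2 * R) * (1 + d/3) powr (2/k)"
    using k d by (simp add: powr_mult exp_powr_real)
  finally have "A powr (2/k) * B\<^sup>2 \<le> exp (2 * R) * (1 + d/3) powr (2/k) * (exp ((k - 1) * R) * (1 + d/3))\<^sup>2"
    using assms by (intro mult_mono power_mono) auto
  also have "\<dots> = (exp (k * R))\<^sup>2 * (1 + d/3) powr (2/k + 2)"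
    using d by (simp add: powr_add powr_realpow power_mult_distrib exp_add[symmetric]
        flip: exp_of_nat_mult) (simp add: algebra_simps)
  also have "\<dots> \<le> A\<^sup>2 * (1 - d) powr (-2) * (1 + d) powr (2/k + 2)"
    using assms by (intro mult_mono square_le_of_lower_approx powr_mono2) auto
  finally show ?thesis by (simp add: ac_simps)
qed

lemma mult_powr_le_of_approx:
  fixes k A B R d :: real
  assumes k: "1/2 < k" and d: "0 \<le> d" "d < 1" and "0 \<le> A" "0 \<le> B"
    and A_upper: "A \<le> exp (k * R) * (1 + d/3)" and A_lower: "exp (k * R) * (1 - d/3) \<le> A"
    and B_upper: "B \<le> exp ((k - 1) * R) * (1 + d/3)"
  shows "(B * A) powr (2*k / (2*k - 1)) \<le> A\<^sup>2 * (1 + d) powr (2*k / (2*k - 1)) * (1 - d) powr (-2)"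
proof -
  define p where "p = 2*k / (2*k - 1)"
  have p: "0 < p" using k by (simp add: p_def)
  have "B * A \<le> exp ((k - 1) * R) * (1 + d/3) * (exp (k * R) * (1 + d/3))"
    using assms by (intro mult_mono) auto
  also have "\<dots> = exp ((2*k - 1) * R) * (1 + d/3)\<^sup>2"
    by (simp add: exp_add[symmetric] power2_eq_square algebra_simps)
  finally have "(B * A) powr p \<le> (exp ((2*k - 1) * R) * (1 + d/3)\<^sup>2) powr p"
    using assms p by (intro powr_mono2) auto
  also have "\<dots> = (exp (k * R))\<^sup>2 * ((1 + d/3)\<^sup>2) powr p"
    using k d by (simp add: powr_mult exp_powr_real p_def power2_eq_square exp_add[symmetric])
  also have "\<dots> \<le> A\<^sup>2 * (1 - d) powr (-2) * (1 + d) powr p"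
  proof (intro mult_mono square_le_of_lower_approx powr_mono2)
    have "d * d \<le> d * 3" using d by (intro mult_left_mono) auto
    then show "(1 + d/3)\<^sup>2 \<le> 1 + d" by (simp add: power2_eq_square field_simps)
  qed (use assms p in auto)
  finally show ?thesis by (simp add: p_def ac_simps)
qed

lemma powr_mult_square_le_power:
  fixes k A B W :: real
  assumes "0 < k" "0 \<le> A" "A \<le> W" "0 \<le> B" "B \<le> W" "1 \<le> W" and N: "2/k + 2 \<le> real N"
  shows "A powr (2/k) * B\<^sup>2 \<le> W ^ N"
proof -
  have "A powr (2/k) * B\<^sup>2 \<le> W powr (2/k) * W\<^sup>2"
    using assms by (intro mult_mono powr_mono2 power_mono) auto
  also have "\<dots> = W powr (2/k + 2)"
    using assms by (simp add: powr_add powr_realpow)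
  also have "\<dots> \<le> W powr real N"
    using assms by (intro powr_mono) auto
  finally show ?thesis
    using assms by (simp add: powr_realpow)
qed

lemma mult_powr_le_power:
  fixes p A B W :: real
  assumes "0 < p" "0 \<le> A" "A \<le> W" "0 \<le> B" "B \<le> W" "1 \<le> W" and N: "2 * p \<le> real N"
  shows "(B * A) powr p \<le> W ^ N"
proof -
  have "(B * A) powr p \<le> (W * W) powr p"
    using assms by (intro powr_mono2 mult_mono) auto
  also have "\<dots> = W powr (2 * p)"
    using assms by (simp add: powr_mult powr_add[symmetric])
  also have "\<dots> \<le> W powr real N"
    using assms by (intro powr_mono) auto
  finally show ?thesis
    using assms by (simp add: powr_realpow)
qed

lemma rk_ge_small:
  assumes "k \<le> 1/2"
  shows "2/k + 2 \<le> real (2 * rk k)"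
  using assms by (simp add: rk_def) linarith

lemma rk_ge_large:
  assumes "1/2 < k"
  shows "2 * (2*k / (2*k - 1)) \<le> real (2 * rk k)"
  using assms by (simp add: rk_def) linarith

lemma Nj_eq_partial_sum:
  "Nj k T j s a = (\<Sum>i=0..Kj k T j. (of_real a * Pj T j s) ^ i / of_nat (fact i))"
  by (simp add: Nj_def Etr_def Kj_def)

lemma norm_Qj:
  "cmod (Qj k T j s) = (64 * max 2 (k + 3/2) * cmod (Pj T j s) / real (Kj k T j)) ^ Kj k T j"
  by (simp add: Qj_def norm_power norm_divide norm_mult)

lemma exp_minus_Kj_le_deltaj: "exp (- real (Kj k T j)) \<le> deltaj k T j"
  unfolding Kj_def deltaj_def by simp linarith

lemma alpha_pos:
  assumes "exp 1 < T" "1 \<le> j"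
  shows "0 < alpha T j"
proof -
  have "0 < T" using assms(1) by (smt (verit) exp_gt_zero)
  then have "1 < ln T" using assms(1) by (metis ln_exp ln_less_cancel_iff exp_gt_zero)
  then show ?thesis using assms(2) by (simp add: alpha_def)
qed

lemma Kj_deltaj_bounds:
  assumes "0 < k" "0 < alpha T j"
  shows "1 \<le> Kj k T j" "0 < deltaj k T j" "deltaj k T j < 1"
proof -
  have l: "0 < exp 2 * k * alpha T j powr (- 3/4)" using assms by simp
  then have "1 \<le> \<lceil>exp 2 * k * alpha T j powr (- 3/4)\<rceil>" by simp
  then show "1 \<le> Kj k T j" by (simp add: Kj_def le_nat_iff)
  show "0 < deltaj k T j" "deltaj k T j < 1" using l by (auto simp: deltaj_def)
qed

lemma Nj_regimes [consumes 2, case_names approx dominated]: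
  assumes k: "0 < k" and alpha: "0 < alpha T j"
  obtains
    (approx) "cmod (Nj k T j s k) \<le> exp (k * Re (Pj T j s)) * (1 + deltaj k T j / 3)"
      "exp (k * Re (Pj T j s)) * (1 - deltaj k T j / 3) \<le> cmod (Nj k T j s k)"
      "cmod (Nj k T j s (k - 1)) \<le> exp ((k - 1) * Re (Pj T j s)) * (1 + deltaj k T j / 3)"
  | (dominated) "cmod (Nj k T j s k) \<le> cmod (Qj k T j s)"
      "cmod (Nj k T j s (k - 1)) \<le> cmod (Qj k T j s)" "1 \<le> cmod (Qj k T j s)"
proof -
  define c where "c = max 2 (k + 3/2)"
  define P where "P = Pj T j s"
  define K where "K = Kj k T j"
  have K: "1 \<le> K" using Kj_deltaj_bounds[OF k alpha] by (simp add: K_def)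
  have coeffs: "\<bar>k\<bar> \<le> c" "\<bar>k - 1\<bar> \<le> c" using k by (auto simp: c_def)
  have norm_arg: "cmod (of_real a * P) \<le> c * cmod P" if "\<bar>a\<bar> \<le> c" for a
    using that by (simp add: norm_mult mult_right_mono)
  show thesis
  proof (cases "c * cmod P \<le> real K / 32")
    case True
    have "cmod (Nj k T j s a) \<le> exp (a * Re P) * (1 + deltaj k T j / 3)"
      "exp (a * Re P) * (1 - deltaj k T j / 3) \<le> cmod (Nj k T j s a)" if "\<bar>a\<bar> \<le> c" for a
      using norm_exp_partial_sum_rel_error[OF order_trans[OF norm_arg[OF that] True], of "deltaj k T j"]
        exp_minus_Kj_le_deltaj[of k T j]
      by (simp_all add: Nj_eq_partial_sum K_def P_def)
    with coeffs show thesis by (intro approx) (simp_all add: P_def)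
  next
    case False
    have "cmod (Nj k T j s a) \<le> cmod (Qj k T j s)" if "\<bar>a\<bar> \<le> c" for a
    proof -
      have "cmod (Nj k T j s a) \<le> (\<Sum>i=0..K. (c * cmod P) ^ i / fact i)"
        unfolding Nj_eq_partial_sum K_def[symmetric] P_def[symmetric]
        by (rule norm_exp_partial_sum_le[OF norm_arg[OF that]])
      also have "\<dots> \<le> (64 * (c * cmod P) / real K) ^ K"
        using False K by (intro exp_partial_sum_le_power) auto
      finally show ?thesis by (simp add: norm_Qj c_def P_def K_def mult.assoc)
    qed
    moreover have "1 \<le> cmod (Qj k T j s)"
    proof -
      have "1 \<le> 64 * c * cmod P / real K" using False K by (simp add: field_simps)
      then show ?thesis by (simp add: norm_Qj c_def P_def K_def)
    qed
    ultimately show thesis using coeffs by (intro dominated) auto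
  qed
qed

lemma Nj_inequality_small_k:
  assumes k: "0 < k" "k \<le> 1/2" and alpha: "0 < alpha T j"
  shows "cmod (Nj k T j s k) powr (2 / k) * cmod (Nj k T j s (k - 1)) ^ 2
    \<le> cmod (Nj k T j s k) ^ 2 * (1 + deltaj k T j) powr (2 / k + 2) * (1 - deltaj k T j) powr (-2)
      + cmod (Qj k T j s) ^ (2 * rk k)"
proof -
  have delta: "0 \<le> deltaj k T j" "deltaj k T j < 1"
    using Kj_deltaj_bounds[OF k(1) alpha] by auto
  from k(1) alpha show ?thesis
  proof (cases rule: Nj_regimes[of k T j s])
    case approx
    then show ?thesis
      by (intro add_increasing2 powr_mult_square_le_of_approx[OF k(1) delta _ _ approx]) auto
  next
    case dominated
    then show ?thesis
      using rk_ge_small[OF k(2)] delta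
      by (intro add_increasing powr_mult_square_le_power[OF k(1)]) auto
  qed
qed

lemma Nj_inequality_large_k:
  assumes k: "1/2 < k" and alpha: "0 < alpha T j"
  shows "cmod (Nj k T j s (k - 1) * Nj k T j s k) powr (2 * k / (2 * k - 1))
    \<le> cmod (Nj k T j s k) ^ 2 * (1 + deltaj k T j) powr (2 * k / (2 * k - 1)) * (1 - deltaj k T j) powr (-2)
      + cmod (Qj k T j s) ^ (2 * rk k)"
proof -
  have k0: "0 < k" using k by simp
  have delta: "0 \<le> deltaj k T j" "deltaj k T j < 1"
    using Kj_deltaj_bounds[OF k0 alpha] by auto
  from k0 alpha show ?thesis
  proof (cases rule: Nj_regimes[of k T j s])
    case approx
    then show ?thesis unfolding norm_mult
      by (intro add_increasing2 mult_powr_le_of_approx[OF k delta _ _ approx]) auto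
  next
    case dominated
    then show ?thesis unfolding norm_mult
      using rk_ge_large[OF k] delta k
      by (intro add_increasing mult_powr_le_power) auto
  qed
qed

theorem lemma3p2:
  fixes k :: real
  assumes "k > 0"
  shows "\<exists>M0. \<forall>M\<ge>M0. \<exists>T0. \<forall>T\<ge>T0. \<forall>j\<in>{1..Jcal T M}. \<forall>s::complex.
    (k \<le> 1/2 \<longrightarrow>
      cmod (Nj k T j s k) powr (2 / k) * cmod (Nj k T j s (k - 1)) ^ 2
        \<le> cmod (Nj k T j s k) ^ 2 * (1 + deltaj k T j) powr (2 / k + 2) * (1 - deltaj k T j) powr (-2)
          + cmod (Qj k T j s) ^ (2 * rk k)) \<and>
    (k > 1/2 \<longrightarrow>
      cmod (Nj k T j s (k - 1) * Nj k T j s k) powr (2 * k / (2 * k - 1))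
        \<le> cmod (Nj k T j s k) ^ 2 * (1 + deltaj k T j) powr (2 * k / (2 * k - 1)) * (1 - deltaj k T j) powr (-2)
          + cmod (Qj k T j s) ^ (2 * rk k))"
  by (rule exI[of _ 0], intro allI impI, rule exI[of _ "exp 1 + 1"], intro allI impI ballI,
      intro conjI impI Nj_inequality_small_k Nj_inequality_large_k alpha_pos) (use assms in auto)

end
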